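(* Assume $E X_1<\infty$ and fix $\epsilon\in(0,\mu)$. For the $s$-th system define $$\kappa(V)=\inf\{k\ge 1: V_{n+1}\le n(\mu-\epsilon)/s \ \text{for all } n\ge k\},\qquad \kappa(A)=\inf\{k\ge1: |A_{n+1}|\ge n(\mu-\epsilon)/s\ \text{for all } n\ge k\},$$ and $\kappa=\max\{\kappa(V),\kappa(A)\}$. Then, as $s\to\infty$: (1) if $E V_1^{q}<\infty$ for some $q>2$, then $E_\pi^s\kappa=O(s^{q/(q-1)})$; (2) if moreover $E\exp(\theta V_1)<\infty$ for some $\theta>0$, then $E_\pi^s\kappa=O(s\log s)$.
   Context: Let $(X_n)_{n\ge1}$ be i.i.d. strictly positive random variables with mean $\mu=EX_1\in(0,\infty)$, and $(V_n)_{n\ge1}$ i.i.d. nonnegative random variables independent of $(X_n)$. For a scale parameter $s\in\{1,2,\dots\}$, the $s$-th system is the time-stationary GI/GI/$\infty$ queue whose arrival epochs form a time-stationary renewal process on $\mathbb R$ with interarrival times distributed as $X_1/s$; service times are not scaled. The arrival epochs in $(-\infty,0]$, counted backwards from $0$, are $0\ge A_1>A_2>\cdots$ with $A_n-A_{n+1}=X_n/s$ (and $|A_1|$ having the stationary-excess distribution of $X_1/s$, independent of $(X_n)$); the $n$-th customer has service requirement $V_n$, starts service immediately at $A_n$ and departs at $A_n+V_n$. $E_\pi^s$ denotes expectation for this stationary $s$-th system. $\inf\emptyset=\infty$. *)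

theory Defs
  imports "HOL-Probability.Probability"
begin

text \<open>Indexing convention (0-based shift of the paper's 1-based indices):
  X n = paper X_(n+1), V n = paper V_(n+1), A s n = paper A_(n+1) in the s-th system.\<close>

definition excess_density :: "'a measure \<Rightarrow> ('a \<Rightarrow> real) \<Rightarrow> real \<Rightarrow> ennreal" where
  "excess_density M Y x =
     (if 0 \<le> x then ennreal (measure M {\<omega> \<in> space M. Y \<omega> > x} / (\<integral>\<omega>. Y \<omega> \<partial>M)) else 0)"

text \<open>kappa(V) = inf{k \<ge> 1 : V_(n+1) \<le> n(\<mu>-\<epsilon>)/s for all n \<ge> k}; inf of empty set = \<infinity>.\<close>
definition kappaV :: "real \<Rightarrow> real \<Rightarrow> nat \<Rightarrow> (nat \<Rightarrow> 'a \<Rightarrow> real) \<Rightarrow> 'a \<Rightarrow> ennreal" where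
  "kappaV \<mu> \<epsilon> s V \<omega> =
     (INF k \<in> {k::nat. 1 \<le> k \<and> (\<forall>n\<ge>k. V n \<omega> \<le> real n * (\<mu> - \<epsilon>) / real s)}. ennreal (real k))"

definition kappaA :: "real \<Rightarrow> real \<Rightarrow> nat \<Rightarrow> (nat \<Rightarrow> 'a \<Rightarrow> real) \<Rightarrow> 'a \<Rightarrow> ennreal" where
  "kappaA \<mu> \<epsilon> s A \<omega> =
     (INF k \<in> {k::nat. 1 \<le> k \<and> (\<forall>n\<ge>k. \<bar>A n \<omega>\<bar> \<ge> real n * (\<mu> - \<epsilon>) / real s)}. ennreal (real k))"

definition kappa :: "real \<Rightarrow> real \<Rightarrow> nat \<Rightarrow> (nat \<Rightarrow> 'a \<Rightarrow> real) \<Rightarrow> (nat \<Rightarrow> 'a \<Rightarrow> real) \<Rightarrow> 'a \<Rightarrow> ennreal" where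
  "kappa \<mu> \<epsilon> s V A \<omega> = max (kappaV \<mu> \<epsilon> s V \<omega>) (kappaA \<mu> \<epsilon> s A \<omega>)"

end

theory Submission
  imports Defs
begin

text \<open>
  Both \<open>\<kappa>(V)\<close> and \<open>\<kappa>(A)\<close> are at most \<open>m\<close> plus the sum of the indices \<open>n \<ge> m\<close> at which
  the defining inequality fails, for any \<open>m \<ge> 1\<close>.

  Since \<open>A\<^sub>1 \<le> 0\<close>, \<open>|A\<^sub>n\<^sub>+\<^sub>1| \<ge> (X\<^sub>1 + \<dots> + X\<^sub>n)/s\<close>, so a failure for \<open>\<kappa>(A)\<close> forces
  \<open>X\<^sub>1 + \<dots> + X\<^sub>n < n(\<mu> - \<epsilon>)\<close>, an event not involving \<open>s\<close>. Truncating the \<open>X\<^sub>i\<close> at a level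
  whose truncated mean still exceeds \<open>\<mu> - \<epsilon>\<close>, Hoeffding's inequality bounds its probability
  by \<open>exp(-\<delta>n)\<close>, so the expected sum of failing indices is bounded uniformly in \<open>s\<close>.

  The \<open>V\<^sub>n\<close> are identically distributed, so the expected sum of the failing indices
  \<open>n \<ge> m\<close> for \<open>\<kappa>(V)\<close> is at most \<open>E[Y\<^sup>2; Y > m]\<close> with \<open>Y = sV\<^sub>1/(\<mu> - \<epsilon>)\<close>. With a
  \<open>q\<close>-th moment this is \<open>O(s^q / m^(q-2))\<close>, balanced against \<open>m\<close> by \<open>m \<approx> s^(q/(q-1))\<close>; with an exponential
  moment and \<open>m \<approx> s log s\<close> it is \<open>O(s)\<close>.
\<close>

lemma INF_tail_index_le:
  fixes P :: "nat \<Rightarrow> bool"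
  assumes "1 \<le> m"
  shows "(INF k \<in> {k. 1 \<le> k \<and> (\<forall>n\<ge>k. P n)}. ennreal (real k))
           \<le> ennreal (real m) + (\<Sum>n. if m \<le> n \<and> \<not> P n then ennreal (real n) else 0)"
proof (cases "finite {n. m \<le> n \<and> \<not> P n}")
  case True
  define F where "F = {n. m \<le> n \<and> \<not> P n}"
  have "P n" if "m + \<Sum>F \<le> n" for n
  proof (rule ccontr)
    assume "\<not> P n"
    with that have "n \<in> F" by (simp add: F_def)
    then have "n \<le> \<Sum>F" by (rule member_le_sum) (use True in \<open>auto simp: F_def\<close>)
    with that assms show False by linarith
  qed
  then have "m + \<Sum>F \<in> {k. 1 \<le> k \<and> (\<forall>n\<ge>k. P n)}"
    using assms by simp
  then have "(INF k \<in> {k. 1 \<le> k \<and> (\<forall>n\<ge>k. P n)}. ennreal (real k)) \<le> ennreal (real (m + \<Sum>F))"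
    by (rule INF_lower)
  also have "\<dots> = ennreal (real m) + (\<Sum>n\<in>F. ennreal (real n))"
    by (simp add: of_nat_sum sum_ennreal sum_nonneg)
  also have "(\<Sum>n\<in>F. ennreal (real n)) = (\<Sum>n. if m \<le> n \<and> \<not> P n then ennreal (real n) else 0)"
    using True by (subst suminf_finite[of F]) (auto simp: F_def intro: sum.cong)
  finally show ?thesis .
next
  case False
  have "of_nat N \<le> (\<Sum>n. if m \<le> n \<and> \<not> P n then ennreal (real n) else 0)" for N
  proof -
    obtain n where n: "N \<le> n" "m \<le> n" "\<not> P n"
      using False by (auto simp: infinite_nat_iff_unbounded_le)
    have "of_nat N \<le> (\<Sum>i\<in>{n}. if m \<le> i \<and> \<not> P i then ennreal (real i) else 0)"
      using n by (simp add: ennreal_of_nat_eq_real_of_nat)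
    also have "\<dots> \<le> (\<Sum>n. if m \<le> n \<and> \<not> P n then ennreal (real n) else 0)"
      by (rule sum_le_suminf) auto
    finally show ?thesis .
  qed
  then have "(SUP N. of_nat N :: ennreal) \<le> (\<Sum>n. if m \<le> n \<and> \<not> P n then ennreal (real n) else 0)"
    by (rule SUP_least)
  then show ?thesis
    by (simp add: ennreal_SUP_of_nat_eq_top top_unique)
qed

lemma suminf_indices_below_le_square:
  fixes x :: real
  assumes "1 \<le> m"
  shows "(\<Sum>n. if m \<le> n \<and> real n < x then ennreal (real n) else 0)
           \<le> (if real m < x then ennreal (x\<^sup>2) else 0)"
proof -
  have "(\<Sum>n. if m \<le> n \<and> real n < x then ennreal (real n) else 0)
      = (\<Sum>n\<in>{m..<nat \<lceil>x\<rceil>}. if m \<le> n \<and> real n < x then ennreal (real n) else 0)"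
    by (rule suminf_finite) (auto, linarith)
  also have "\<dots> \<le> (\<Sum>n\<in>{m..<nat \<lceil>x\<rceil>}. ennreal x)"
    by (intro sum_mono) (auto intro: ennreal_leI)
  also have "\<dots> \<le> (if real m < x then ennreal (x\<^sup>2) else 0)"
  proof (cases "real m < x")
    case True
    then have "m \<le> nat \<lceil>x\<rceil>" by linarith
    then have "real (nat \<lceil>x\<rceil> - m) \<le> x" using assms by (simp add: of_nat_diff) linarith
    then have "real (nat \<lceil>x\<rceil> - m) * x \<le> x\<^sup>2"
      using True by (simp add: power2_eq_square mult_right_mono)
    then show ?thesis
      using True by (simp add: ennreal_of_nat_eq_real_of_nat ennreal_mult'[symmetric] ennreal_leI)
  next
    case False
    then have "nat \<lceil>x\<rceil> \<le> m" by linarith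
    then show ?thesis using False by simp
  qed
  finally show ?thesis .
qed

lemma summable_real_mult_exp_neg:
  fixes \<delta> :: real
  assumes "0 < \<delta>"
  shows "summable (\<lambda>n. real n * exp (- \<delta> * real n))"
proof (rule summable_comparison_test[where g = "\<lambda>n. 2 / \<delta> * exp (- \<delta> / 2) ^ n"])
  show "summable (\<lambda>n. 2 / \<delta> * exp (- \<delta> / 2) ^ n)"
    using assms by (intro summable_mult summable_geometric) simp
  have "real n * exp (- \<delta> * real n) \<le> 2 / \<delta> * exp (- \<delta> / 2) ^ n" for n
  proof -
    have "real n \<le> 2 / \<delta> * exp (\<delta> * real n / 2)"
      using exp_ge_add_one_self[of "\<delta> * real n / 2"] assms by (simp add: field_simps)
    then have "real n * exp (- \<delta> * real n) \<le> 2 / \<delta> * exp (\<delta> * real n / 2) * exp (- \<delta> * real n)"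
      by (rule mult_right_mono) simp
    also have "\<dots> = 2 / \<delta> * exp (- \<delta> / 2) ^ n"
      by (simp add: mult.assoc exp_add[symmetric] exp_of_nat_mult[symmetric] field_simps)
    finally show ?thesis .
  qed
  then show "\<exists>N. \<forall>n\<ge>N. norm (real n * exp (- \<delta> * real n)) \<le> 2 / \<delta> * exp (- \<delta> / 2) ^ n"
    by simp
qed

lemma square_le_powr_div_powr:
  fixes x m q :: real
  assumes "0 < m" "m < x" "2 \<le> q"
  shows "x\<^sup>2 \<le> x powr q / m powr (q - 2)"
proof -
  have "x\<^sup>2 * m powr (q - 2) \<le> x powr 2 * x powr (q - 2)"
    using assms by (intro mult_mono powr_mono2) (auto simp: powr_numeral)
  also have "\<dots> = x powr q" by (simp add: powr_add[symmetric])
  finally show ?thesis using assms by (simp add: field_simps)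
qed

lemma powr_div_powr_le:
  fixes x q y :: real
  assumes "1 \<le> x" "2 \<le> q" "x powr (q / (q - 1)) \<le> y"
  shows "x powr q / y powr (q - 2) \<le> x powr (q / (q - 1))"
proof -
  define p where "p = q / (q - 1)"
  have "p * (q - 1) = q" using assms(2) by (simp add: p_def)
  then have "p + p * (q - 2) = q" by (simp add: algebra_simps)
  then have "x powr q = x powr p * (x powr p) powr (q - 2)"
    by (simp add: powr_powr powr_add[symmetric])
  also have "\<dots> \<le> x powr p * y powr (q - 2)"
    using assms by (intro mult_left_mono powr_mono2) (auto simp: p_def)
  finally show ?thesis
    using assms by (simp add: p_def divide_le_eq mult.commute)
qed

lemma square_le_exp:
  fixes y \<theta> :: real
  assumes "0 < \<theta>" "0 \<le> y"
  shows "y\<^sup>2 \<le> 16 / \<theta>\<^sup>2 * exp (\<theta> * y / 2)"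
proof -
  have "\<theta> * y / 4 \<le> exp (\<theta> * y / 4)"
    using exp_ge_add_one_self[of "\<theta> * y / 4"] by linarith
  then have "(\<theta> * y / 4)\<^sup>2 \<le> (exp (\<theta> * y / 4))\<^sup>2"
    using assms by (intro power_mono) auto
  also have "\<dots> = exp (\<theta> * y / 2)" by (simp add: power2_eq_square exp_add[symmetric])
  finally show ?thesis using assms by (simp add: field_simps power2_eq_square)
qed

lemma (in prob_space) indep_sets_reindex:
  assumes f: "inj_on f I" and indep: "indep_sets F (f ` I)"
  shows "indep_sets (\<lambda>i. F (f i)) I"
proof (rule indep_setsI)
  show "F (f i) \<subseteq> events" if "i \<in> I" for i
    using indep that by (auto simp: indep_sets_def)
  fix A J assume J: "J \<noteq> {}" "J \<subseteq> I" "finite J" and A: "\<forall>j\<in>J. A j \<in> F (f j)"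
  define B where "B = (\<lambda>k. A (the_inv_into J f k))"
  have fJ: "inj_on f J" using f J(2) by (rule inj_on_subset)
  have B: "B (f j) = A j" if "j \<in> J" for j
    using fJ that by (simp add: B_def the_inv_into_f_f)
  have "prob (\<Inter>k\<in>f ` J. B k) = (\<Prod>k\<in>f ` J. prob (B k))"
    by (rule indep_setsD[OF indep]) (use J A B in auto)
  then show "prob (\<Inter>j\<in>J. A j) = (\<Prod>j\<in>J. prob (A j))"
    using B by (simp add: prod.reindex[OF fJ])
qed

lemma (in prob_space) indep_vars_reindex:
  assumes "inj_on f I" and "indep_vars M' X (f ` I)"
  shows "indep_vars (\<lambda>i. M' (f i)) (\<lambda>i. X (f i)) I"
  using assms indep_sets_reindex[of f I "\<lambda>k. {X k -` A \<inter> space M |A. A \<in> sets (M' k)}"]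
  by (auto simp: indep_vars_def2)

lemma distributed_AE_nonneg:
  fixes Y :: "'a \<Rightarrow> real"
  assumes "distributed M lborel Y f" and "\<And>x. x < 0 \<Longrightarrow> f x = 0"
  shows "AE \<omega> in M. 0 \<le> Y \<omega>"
proof (rule AE_distrD[where f = Y and M' = lborel])
  show "Y \<in> measurable M lborel" using assms(1) by (rule distributed_measurable)
  have "AE x in lborel. 0 < f x \<longrightarrow> 0 \<le> (x::real)"
    by (rule AE_I2) (use assms(2) in \<open>force simp: not_le[symmetric]\<close>)
  then have "AE x in density lborel f. 0 \<le> (x::real)"
    using distributed_borel_measurable[OF assms(1)] by (simp add: AE_density)
  then show "AE x in distr M lborel Y. 0 \<le> x"
    unfolding distributed_distr_eq_density[OF assms(1)] .
qed

lemma (in prob_space) tendsto_expectation_min: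
  assumes "integrable M X"
  shows "(\<lambda>T. expectation (\<lambda>\<omega>. min (X \<omega>) (real T))) \<longlonglongrightarrow> expectation X"
proof (rule integral_dominated_convergence[where w = "\<lambda>\<omega>. \<bar>X \<omega>\<bar>"])
  show "AE \<omega> in M. (\<lambda>T. min (X \<omega>) (real T)) \<longlonglongrightarrow> X \<omega>"
  proof (rule AE_I2)
    fix \<omega>
    show "(\<lambda>T. min (X \<omega>) (real T)) \<longlonglongrightarrow> X \<omega>"
      by (intro tendsto_eventually eventually_sequentiallyI[of "nat \<lceil>X \<omega>\<rceil>"]) linarith
  qed
  show "AE \<omega> in M. norm (min (X \<omega>) (real T)) \<le> \<bar>X \<omega>\<bar>" for T
    by (intro AE_I2) auto
qed (use assms in auto)

lemma (in prob_space) prob_truncated_mean_le: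
  fixes X :: "nat \<Rightarrow> 'a \<Rightarrow> real" and T d :: real
  assumes indep: "indep_vars (\<lambda>_. borel) X UNIV"
    and ident: "\<And>n. distr M borel (X n) = distr M borel (X 0)"
    and nonneg: "AE \<omega> in M. 0 \<le> X 0 \<omega>"
    and "0 < T" "0 \<le> d" "1 \<le> n"
  shows "prob {\<omega> \<in> space M. (\<Sum>j<n. min (X j \<omega>) T) / real n \<le> expectation (\<lambda>\<omega>. min (X 0 \<omega>) T) - d}
           \<le> exp (- 2 * real n * d\<^sup>2 / T\<^sup>2)"
proof -
  have [measurable]: "X j \<in> borel_measurable M" for j
    using indep by (simp add: indep_vars_def)
  interpret Hoeffding_ineq_iid M "{..<n}" "\<lambda>j \<omega>. min (X j \<omega>) T" "\<lambda>\<omega>. min (X 0 \<omega>) T" 0 T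
    "expectation (\<lambda>\<omega>. min (X 0 \<omega>) T)"
  proof unfold_locales
    show "indep_vars (\<lambda>_. borel) (\<lambda>j \<omega>. min (X j \<omega>) T) {..<n}"
      using indep_vars_compose2[OF indep, of "\<lambda>_ x. min x T" "\<lambda>_. borel"]
      by (rule indep_vars_subset) auto
    show "AE \<omega> in M. min (X 0 \<omega>) T \<in> {0..T}"
      using nonneg by eventually_elim (use \<open>0 < T\<close> in auto)
    have "distr M borel (\<lambda>\<omega>. min (X j \<omega>) T) = distr (distr M borel (X j)) borel (\<lambda>x. min x T)" for j
      by (subst distr_distr) (auto simp: comp_def)
    then show "distr M borel (\<lambda>\<omega>. min (X j \<omega>) T) = distr M borel (\<lambda>\<omega>. min (X 0 \<omega>) T)" for j
      by (simp add: ident[of j])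
  qed simp_all
  have "{..<n} \<noteq> {}" using \<open>1 \<le> n\<close> by (cases n) auto
  from Hoeffding_ineq_le'[OF \<open>0 \<le> d\<close> \<open>0 < T\<close> this] show ?thesis
    by simp
qed

lemma (in prob_space) nn_integral_lower_deviation_indices_finite:
  fixes X :: "nat \<Rightarrow> 'a \<Rightarrow> real"
  assumes indep: "indep_vars (\<lambda>_. borel) X UNIV"
    and ident: "\<And>n. distr M borel (X n) = distr M borel (X 0)"
    and nonneg: "AE \<omega> in M. 0 \<le> X 0 \<omega>"
    and int: "integrable M (X 0)" and "c < expectation (X 0)"
  shows "(\<integral>\<^sup>+\<omega>. (\<Sum>n. if (\<Sum>j<n. X j \<omega>) < real n * c then ennreal (real n) else 0) \<partial>M) < \<infinity>"
proof -
  have [measurable]: "X j \<in> borel_measurable M" for j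
    using indep by (simp add: indep_vars_def)
  have "\<forall>\<^sub>F T in sequentially. 1 \<le> T \<and> c < expectation (\<lambda>\<omega>. min (X 0 \<omega>) (real T))"
    using eventually_ge_at_top order_tendstoD(1)[OF tendsto_expectation_min[OF int] \<open>c < _\<close>]
    by (rule eventually_conj)
  then obtain T :: nat where T: "1 \<le> T" and cT: "c < expectation (\<lambda>\<omega>. min (X 0 \<omega>) (real T))"
    unfolding eventually_sequentially by (meson order.refl)
  define EY where "EY = expectation (\<lambda>\<omega>. min (X 0 \<omega>) (real T))"
  define \<delta> where "\<delta> = 2 * (EY - c)\<^sup>2 / (real T)\<^sup>2"
  define G where "G n = {\<omega> \<in> space M. (\<Sum>j<n. min (X j \<omega>) (real T)) / real n \<le> c}" for n
  have G[measurable]: "G n \<in> sets M" for n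
    unfolding G_def by measurable
  have "0 < \<delta>" using T cT by (simp add: \<delta>_def EY_def)
  have G_small: "ennreal (real n) * emeasure M (G n) \<le> ennreal (real n * exp (- \<delta> * real n))" for n
  proof (cases "n = 0")
    case False
    have "prob (G n) \<le> exp (- \<delta> * real n)"
      using prob_truncated_mean_le[OF indep ident nonneg, of "real T" "EY - c" n] T cT False
      by (simp add: G_def EY_def \<delta>_def mult_ac)
    then show ?thesis
      by (simp add: emeasure_eq_measure ennreal_mult[symmetric] mult_left_mono ennreal_leI)
  qed simp
  have G_cover: "\<omega> \<in> G n" if "(\<Sum>j<n. X j \<omega>) < real n * c" "\<omega> \<in> space M" for n \<omega>
  proof -
    have "n \<noteq> 0" using that(1) by (cases n) auto
    moreover have "(\<Sum>j<n. min (X j \<omega>) (real T)) \<le> (\<Sum>j<n. X j \<omega>)"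
      by (rule sum_mono) simp
    ultimately show ?thesis
      using that by (simp add: G_def pos_divide_le_eq mult.commute)
  qed
  have "(\<integral>\<^sup>+\<omega>. (\<Sum>n. if (\<Sum>j<n. X j \<omega>) < real n * c then ennreal (real n) else 0) \<partial>M)
      \<le> (\<integral>\<^sup>+\<omega>. (\<Sum>n. ennreal (real n) * indicator (G n) \<omega>) \<partial>M)"
  proof (intro nn_integral_mono suminf_le)
    fix \<omega> n assume "\<omega> \<in> space M"
    then show "(if (\<Sum>j<n. X j \<omega>) < real n * c then ennreal (real n) else 0)
        \<le> ennreal (real n) * indicator (G n) \<omega>"
      using G_cover[OF _ \<open>\<omega> \<in> space M\<close>] by (simp add: indicator_def)
  qed auto
  also have "\<dots> = (\<Sum>n. ennreal (real n) * emeasure M (G n))"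
    by (subst nn_integral_suminf) (auto simp: nn_integral_cmult_indicator)
  also have "\<dots> \<le> (\<Sum>n. ennreal (real n * exp (- \<delta> * real n)))"
    by (intro suminf_le G_small) auto
  also have "\<dots> < \<infinity>"
    using summable_real_mult_exp_neg[OF \<open>0 < \<delta>\<close>] by (simp add: less_top ennreal_suminf_neq_top)
  finally show ?thesis .
qed

lemma nn_integral_exceedance_indices_le:
  fixes V :: "nat \<Rightarrow> 'a \<Rightarrow> real"
  assumes [measurable]: "\<And>n. V n \<in> borel_measurable M"
    and ident: "\<And>n. distr M borel (V n) = distr M borel (V 0)"
    and "0 < a" "1 \<le> m"
  shows "(\<integral>\<^sup>+\<omega>. (\<Sum>n. if m \<le> n \<and> \<not> V n \<omega> \<le> real n * a then ennreal (real n) else 0) \<partial>M)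
           \<le> (\<integral>\<^sup>+\<omega>. (if real m < V 0 \<omega> / a then ennreal ((V 0 \<omega> / a)\<^sup>2) else 0) \<partial>M)"
proof -
  define g where "g n v = (if m \<le> n \<and> \<not> v \<le> real n * a then ennreal (real n) else 0)" for n v
  have [measurable]: "g n \<in> borel_measurable borel" for n
    unfolding g_def by measurable
  have "(\<integral>\<^sup>+\<omega>. g n (V n \<omega>) \<partial>M) = (\<integral>\<^sup>+\<omega>. g n (V 0 \<omega>) \<partial>M)" for n
    using nn_integral_distr[of "V n" M borel "g n"] nn_integral_distr[of "V 0" M borel "g n"]
    by (simp add: ident[of n])
  then have "(\<integral>\<^sup>+\<omega>. (\<Sum>n. g n (V n \<omega>)) \<partial>M) = (\<integral>\<^sup>+\<omega>. (\<Sum>n. g n (V 0 \<omega>)) \<partial>M)"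
    by (subst (1 2) nn_integral_suminf) simp_all
  also have "\<dots> \<le> (\<integral>\<^sup>+\<omega>. (if real m < V 0 \<omega> / a then ennreal ((V 0 \<omega> / a)\<^sup>2) else 0) \<partial>M)"
  proof (rule nn_integral_mono)
    fix \<omega>
    have "\<not> v \<le> real n * a \<longleftrightarrow> real n < v / a" for v n
      using \<open>0 < a\<close> by (simp add: not_le pos_less_divide_eq)
    then show "(\<Sum>n. g n (V 0 \<omega>)) \<le> (if real m < V 0 \<omega> / a then ennreal ((V 0 \<omega> / a)\<^sup>2) else 0)"
      using suminf_indices_below_le_square[OF \<open>1 \<le> m\<close>, of "V 0 \<omega> / a"] by (simp add: g_def)
  qed
  finally show ?thesis by (simp add: g_def)
qed

locale stationary_infinite_server = prob_space M for M :: "'a measure" +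
  fixes X V :: "nat \<Rightarrow> 'a \<Rightarrow> real"
    and A :: "nat \<Rightarrow> nat \<Rightarrow> 'a \<Rightarrow> real"
    and \<mu> \<epsilon> :: real
  assumes indep: "indep_vars (\<lambda>_. borel) (\<lambda>i. case i of Inl n \<Rightarrow> X n | Inr n \<Rightarrow> V n) UNIV"
    and X_id: "\<And>n. distr M borel (X n) = distr M borel (X 0)"
    and V_id: "\<And>n. distr M borel (V n) = distr M borel (V 0)"
    and X_pos: "\<And>n. AE \<omega> in M. X n \<omega> > 0"
    and X_int: "integrable M (X 0)"
    and mu_def: "\<mu> = (\<integral>\<omega>. X 0 \<omega> \<partial>M)"
    and eps: "0 < \<epsilon>" "\<epsilon> < \<mu>"
    and A_step: "\<And>s n \<omega>. s \<ge> 1 \<Longrightarrow> \<omega> \<in> space M \<Longrightarrow> A s n \<omega> - A s (Suc n) \<omega> = X n \<omega> / real s"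
    and A_first: "\<And>s. s \<ge> 1 \<Longrightarrow> distributed M lborel (\<lambda>\<omega>. - A s 0 \<omega>)
                          (excess_density M (\<lambda>\<omega>. X 0 \<omega> / real s))"
begin

lemma X_indep: "indep_vars (\<lambda>_. borel) X UNIV"
  using indep_vars_reindex[of Inl UNIV, OF _ indep_vars_subset[OF indep]] by simp

lemma X_measurable[measurable]: "X n \<in> borel_measurable M"
  using X_indep by (simp add: indep_vars_def)

lemma V_measurable[measurable]: "V n \<in> borel_measurable M"
  using indep unfolding indep_vars_def by (metis UNIV_I sum.case(2))

lemma A_eq:
  assumes "1 \<le> s" "\<omega> \<in> space M"
  shows "A s n \<omega> = A s 0 \<omega> - (\<Sum>i<n. X i \<omega>) / real s"
proof (induction n)
  case (Suc n)
  then show ?case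
    using A_step[OF assms, of n] by (simp add: diff_divide_distrib add_divide_distrib)
qed simp

lemma A0_nonpos: "1 \<le> s \<Longrightarrow> AE \<omega> in M. A s 0 \<omega> \<le> 0"
  using distributed_AE_nonneg[OF A_first] by (simp add: excess_density_def)

definition deviation_cost :: ennreal where
  "deviation_cost =
     (\<integral>\<^sup>+\<omega>. (\<Sum>n. if (\<Sum>j<n. X j \<omega>) < real n * (\<mu> - \<epsilon>) then ennreal (real n) else 0) \<partial>M)"

lemma deviation_cost_finite: "deviation_cost < \<infinity>"
  unfolding deviation_cost_def
  by (rule nn_integral_lower_deviation_indices_finite[OF X_indep X_id])
     (use X_pos[of 0] X_int mu_def eps in \<open>auto elim: AE_mp\<close>)

definition square_tail :: "nat \<Rightarrow> nat \<Rightarrow> ennreal" where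
  "square_tail s m =
     (\<integral>\<^sup>+\<omega>. (if real m < V 0 \<omega> * real s / (\<mu> - \<epsilon>)
              then ennreal ((V 0 \<omega> * real s / (\<mu> - \<epsilon>))\<^sup>2) else 0) \<partial>M)"

lemma nn_integral_kappa_le:
  assumes s: "1 \<le> s" and m: "1 \<le> m"
  shows "(\<integral>\<^sup>+\<omega>. kappa \<mu> \<epsilon> s V (A s) \<omega> \<partial>M) \<le> ennreal (real m + 1) + square_tail s m + deviation_cost"
proof -
  define c where "c = \<mu> - \<epsilon>"
  have "0 < c" using eps by (simp add: c_def)
  define fV where
    "fV \<omega> = (\<Sum>n. if m \<le> n \<and> \<not> V n \<omega> \<le> real n * (c / real s) then ennreal (real n) else 0)" for \<omega>
  define fX where
    "fX \<omega> = (\<Sum>n. if (\<Sum>j<n. X j \<omega>) < real n * c then ennreal (real n) else 0)" for \<omega>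
  have [measurable]: "fV \<in> borel_measurable M" "fX \<in> borel_measurable M"
    unfolding fV_def fX_def by measurable
  have kappaV_le: "kappaV \<mu> \<epsilon> s V \<omega> \<le> ennreal (real m) + fV \<omega>" for \<omega>
    using INF_tail_index_le[OF m] by (simp add: kappaV_def fV_def c_def)
  have kappaA_le: "AE \<omega> in M. kappaA \<mu> \<epsilon> s (A s) \<omega> \<le> 1 + fX \<omega>"
    using A0_nonpos[OF s] AE_space
  proof eventually_elim
    case (elim \<omega>)
    have "(\<Sum>j<n. X j \<omega>) < real n * c" if "\<not> real n * c / real s \<le> \<bar>A s n \<omega>\<bar>" for n
    proof -
      have "(\<Sum>j<n. X j \<omega>) / real s \<le> \<bar>A s n \<omega>\<bar>"
        using A_eq[OF s elim(2), of n] elim(1) by linarith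
      with that have "(\<Sum>j<n. X j \<omega>) / real s < real n * c / real s" by linarith
      with s show ?thesis by (simp add: divide_less_cancel)
    qed
    then have "(\<Sum>n. if 1 \<le> n \<and> \<not> real n * c / real s \<le> \<bar>A s n \<omega>\<bar> then ennreal (real n) else 0) \<le> fX \<omega>"
      unfolding fX_def by (intro suminf_le) auto
    then show ?case
      using INF_tail_index_le[of 1] unfolding kappaA_def c_def
      by (fastforce intro: order_trans add_left_mono)
  qed
  have "AE \<omega> in M. kappa \<mu> \<epsilon> s V (A s) \<omega> \<le> ennreal (real m + 1) + fV \<omega> + fX \<omega>"
    using kappaA_le
  proof eventually_elim
    case (elim \<omega>)
    have "kappa \<mu> \<epsilon> s V (A s) \<omega> \<le> kappaV \<mu> \<epsilon> s V \<omega> + kappaA \<mu> \<epsilon> s (A s) \<omega>"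
      unfolding kappa_def by (intro max.boundedI add_increasing add_increasing2) auto
    also have "\<dots> \<le> (ennreal (real m) + fV \<omega>) + (1 + fX \<omega>)"
      by (rule add_mono[OF kappaV_le elim])
    finally show ?case by (simp add: ennreal_plus add_ac)
  qed
  then have "(\<integral>\<^sup>+\<omega>. kappa \<mu> \<epsilon> s V (A s) \<omega> \<partial>M)
      \<le> (\<integral>\<^sup>+\<omega>. ennreal (real m + 1) + fV \<omega> + fX \<omega> \<partial>M)"
    by (rule nn_integral_mono_AE)
  also have "\<dots> = ennreal (real m + 1) + (\<integral>\<^sup>+\<omega>. fV \<omega> \<partial>M) + (\<integral>\<^sup>+\<omega>. fX \<omega> \<partial>M)"
    by (simp add: nn_integral_add emeasure_space_1)
  also have "(\<integral>\<^sup>+\<omega>. fV \<omega> \<partial>M) \<le> square_tail s m"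
    using nn_integral_exceedance_indices_le[of V M "c / real s" m] V_id \<open>0 < c\<close> s m
    by (simp add: fV_def square_tail_def c_def cong: if_cong)
  also have "(\<integral>\<^sup>+\<omega>. fX \<omega> \<partial>M) = deviation_cost"
    by (simp add: fX_def deviation_cost_def c_def)
  finally show ?thesis by (simp add: add_mono)
qed

lemma nn_integral_kappa_bigO:
  fixes g :: "nat \<Rightarrow> real" and a b :: real
  assumes "0 \<le> b"
    and "\<forall>\<^sub>F s in sequentially. 1 \<le> g s \<and>
           (\<exists>m\<ge>1. real m \<le> a * g s \<and> square_tail s m \<le> ennreal (b * g s))"
  shows "\<exists>C. \<forall>\<^sub>F s in sequentially. (\<integral>\<^sup>+\<omega>. kappa \<mu> \<epsilon> s V (A s) \<omega> \<partial>M) \<le> ennreal (C * g s)"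
proof -
  obtain B where B: "deviation_cost = ennreal B" "0 \<le> B"
    using deviation_cost_finite by (cases deviation_cost) auto
  have "\<forall>\<^sub>F s in sequentially. (\<integral>\<^sup>+\<omega>. kappa \<mu> \<epsilon> s V (A s) \<omega> \<partial>M) \<le> ennreal ((a + 1 + B + b) * g s)"
    using eventually_ge_at_top[of 1] assms(2)
  proof eventually_elim
    case (elim s)
    then obtain m where m: "1 \<le> m" "real m \<le> a * g s" "square_tail s m \<le> ennreal (b * g s)"
      by blast
    have "(\<integral>\<^sup>+\<omega>. kappa \<mu> \<epsilon> s V (A s) \<omega> \<partial>M) \<le> ennreal (real m + 1) + ennreal (b * g s) + ennreal B"
      using nn_integral_kappa_le[OF elim(1) m(1)] m(3) B(1) by (auto intro: order_trans add_mono)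
    also have "\<dots> = ennreal (real m + 1 + b * g s + B)"
      using assms(1) elim B(2) by (simp add: ennreal_plus)
    also have "\<dots> \<le> ennreal ((a + 1 + B + b) * g s)"
      using m(2) elim(2) B(2) mult_left_mono[of 1 "g s" B]
      by (intro ennreal_leI) (simp add: algebra_simps)
    finally show ?case .
  qed
  then show ?thesis by blast
qed

lemma square_tail_le_moment:
  assumes q: "2 \<le> q" and int: "integrable M (\<lambda>\<omega>. V 0 \<omega> powr q)" and "1 \<le> s" "1 \<le> m"
  shows "square_tail s m
           \<le> ennreal ((real s / (\<mu> - \<epsilon>)) powr q / real m powr (q - 2) * expectation (\<lambda>\<omega>. V 0 \<omega> powr q))"
proof -
  define K where "K = (real s / (\<mu> - \<epsilon>)) powr q / real m powr (q - 2)"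
  have "(V 0 \<omega> * real s / (\<mu> - \<epsilon>))\<^sup>2 \<le> K * V 0 \<omega> powr q"
    if "real m < V 0 \<omega> * real s / (\<mu> - \<epsilon>)" for \<omega>
  proof -
    have "(V 0 \<omega> * real s / (\<mu> - \<epsilon>))\<^sup>2 \<le> (V 0 \<omega> * real s / (\<mu> - \<epsilon>)) powr q / real m powr (q - 2)"
      using that \<open>1 \<le> m\<close> q by (intro square_le_powr_div_powr) auto
    also have "\<dots> = (V 0 \<omega> * (real s / (\<mu> - \<epsilon>))) powr q / real m powr (q - 2)"
      by simp
    also have "\<dots> = K * V 0 \<omega> powr q"
      unfolding K_def powr_mult by simp
    finally show ?thesis .
  qed
  then have "square_tail s m \<le> (\<integral>\<^sup>+\<omega>. ennreal (K * V 0 \<omega> powr q) \<partial>M)"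
    unfolding square_tail_def by (intro nn_integral_mono) (auto intro: ennreal_leI)
  also have "\<dots> = ennreal (K * expectation (\<lambda>\<omega>. V 0 \<omega> powr q))"
    using int by (subst nn_integral_eq_integral) (auto simp: K_def)
  finally show ?thesis by (simp add: K_def)
qed

lemma square_tail_le_exp_moment:
  assumes \<theta>: "0 < \<theta>" and int: "integrable M (\<lambda>\<omega>. exp (\<theta> * V 0 \<omega>))" and "1 \<le> s"
    and m: "2 / (\<theta> * (\<mu> - \<epsilon>)) * real s * ln (real s) \<le> real m"
  shows "square_tail s m
           \<le> ennreal (16 / ((\<mu> - \<epsilon>)\<^sup>2 * \<theta>\<^sup>2) * real s * expectation (\<lambda>\<omega>. exp (\<theta> * V 0 \<omega>)))"
proof -
  define c where "c = \<mu> - \<epsilon>"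
  define K where "K = 16 / (c\<^sup>2 * \<theta>\<^sup>2) * real s"
  have "0 < c" "0 < real s" using eps \<open>1 \<le> s\<close> by (auto simp: c_def)
  have "(V 0 \<omega> * real s / c)\<^sup>2 \<le> K * exp (\<theta> * V 0 \<omega>)" if "real m < V 0 \<omega> * real s / c" for \<omega>
  proof -
    let ?v = "V 0 \<omega>"
    have "2 / (\<theta> * c) * real s * ln (real s) < ?v * real s / c"
      using m that by (simp add: c_def)
    then have "ln (real s) < \<theta> * ?v / 2"
      using \<open>0 < c\<close> \<open>0 < real s\<close> \<theta> by (simp add: field_simps)
    then have s_le: "real s \<le> exp (\<theta> * ?v / 2)"
      using \<open>0 < real s\<close> by (metis exp_ln less_imp_le exp_less_cancel_iff)
    have "0 < ?v * (real s / c)"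
      using le_less_trans[OF of_nat_0_le_iff that] by simp
    then have "0 \<le> ?v"
      using \<open>0 < c\<close> \<open>0 < real s\<close> by (auto simp: zero_less_mult_iff zero_less_divide_iff)
    have "(?v * real s / c)\<^sup>2 = (real s)\<^sup>2 / c\<^sup>2 * ?v\<^sup>2"
      by (simp add: field_simps power2_eq_square)
    also have "\<dots> \<le> (real s)\<^sup>2 / c\<^sup>2 * (16 / \<theta>\<^sup>2 * exp (\<theta> * ?v / 2))"
      using square_le_exp[OF \<theta> \<open>0 \<le> ?v\<close>] by (intro mult_left_mono) auto
    also have "\<dots> = K * (real s * exp (\<theta> * ?v / 2))"
      by (simp add: K_def field_simps power2_eq_square)
    also have "\<dots> \<le> K * (exp (\<theta> * ?v / 2) * exp (\<theta> * ?v / 2))"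
      using s_le by (intro mult_left_mono mult_right_mono) (auto simp: K_def)
    also have "\<dots> = K * exp (\<theta> * ?v)"
      by (simp add: exp_add[symmetric])
    finally show ?thesis .
  qed
  then have "square_tail s m \<le> (\<integral>\<^sup>+\<omega>. ennreal (K * exp (\<theta> * V 0 \<omega>)) \<partial>M)"
    unfolding square_tail_def c_def[symmetric] by (intro nn_integral_mono) (auto intro: ennreal_leI)
  also have "\<dots> = ennreal (K * expectation (\<lambda>\<omega>. exp (\<theta> * V 0 \<omega>)))"
    using int by (subst nn_integral_eq_integral) (auto simp: K_def)
  finally show ?thesis by (simp add: K_def c_def)
qed

lemma nn_integral_kappa_moment_bound:
  assumes q: "2 < q" and int: "integrable M (\<lambda>\<omega>. V 0 \<omega> powr q)"
  shows "\<exists>C. \<forall>\<^sub>F s in sequentially.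
           (\<integral>\<^sup>+\<omega>. kappa \<mu> \<epsilon> s V (A s) \<omega> \<partial>M) \<le> ennreal (C * real s powr (q / (q - 1)))"
proof -
  define E where "E = expectation (\<lambda>\<omega>. V 0 \<omega> powr q)"
  define p where "p = q / (q - 1)"
  have "0 \<le> E" unfolding E_def by simp
  have "0 < \<mu> - \<epsilon>" using eps by simp
  show ?thesis
  proof (rule nn_integral_kappa_bigO[where a = 2 and b = "E / (\<mu> - \<epsilon>) powr q"])
    show "0 \<le> E / (\<mu> - \<epsilon>) powr q" using \<open>0 \<le> E\<close> by simp
    show "\<forall>\<^sub>F s in sequentially. 1 \<le> real s powr (q / (q - 1)) \<and>
        (\<exists>m\<ge>1. real m \<le> 2 * real s powr (q / (q - 1)) \<and>
                square_tail s m \<le> ennreal (E / (\<mu> - \<epsilon>) powr q * real s powr (q / (q - 1))))"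
      using eventually_ge_at_top[of 1]
    proof eventually_elim
      case (elim s)
      have "1 \<le> real s powr p" using elim q by (simp add: p_def ge_one_powr_ge_zero)
      define m where "m = nat \<lceil>real s powr p\<rceil>"
      have m: "1 \<le> m" "real s powr p \<le> real m" "real m \<le> 2 * real s powr p"
        using \<open>1 \<le> real s powr p\<close> by (auto simp: m_def) linarith+
      have "square_tail s m \<le> ennreal ((real s / (\<mu> - \<epsilon>)) powr q / real m powr (q - 2) * E)"
        using square_tail_le_moment[OF _ int elim m(1)] q by (simp add: E_def)
      also have "\<dots> \<le> ennreal (E / (\<mu> - \<epsilon>) powr q * real s powr p)"
      proof (intro ennreal_leI)
        have "real s powr q / real m powr (q - 2) \<le> real s powr p"
          using powr_div_powr_le[of "real s" q "real m"] elim q m(2) by (simp add: p_def)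
        from mult_left_mono[OF this \<open>0 \<le> E\<close>]
        show "(real s / (\<mu> - \<epsilon>)) powr q / real m powr (q - 2) * E
            \<le> E / (\<mu> - \<epsilon>) powr q * real s powr p"
          using \<open>0 < \<mu> - \<epsilon>\<close> by (simp add: powr_divide field_simps)
      qed
      finally show ?case using m \<open>1 \<le> real s powr p\<close> by (auto simp: p_def intro!: exI[of _ m])
    qed
  qed
qed

lemma nn_integral_kappa_exp_moment_bound:
  assumes \<theta>: "0 < \<theta>" and int: "integrable M (\<lambda>\<omega>. exp (\<theta> * V 0 \<omega>))"
  shows "\<exists>C. \<forall>\<^sub>F s in sequentially.
           (\<integral>\<^sup>+\<omega>. kappa \<mu> \<epsilon> s V (A s) \<omega> \<partial>M) \<le> ennreal (C * real s * ln (real s))"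
proof -
  define E where "E = expectation (\<lambda>\<omega>. exp (\<theta> * V 0 \<omega>))"
  define K0 where "K0 = 2 / (\<theta> * (\<mu> - \<epsilon>))"
  define b where "b = 16 / ((\<mu> - \<epsilon>)\<^sup>2 * \<theta>\<^sup>2) * E"
  have "0 \<le> E" unfolding E_def by simp
  have "0 < K0" using eps \<theta> by (simp add: K0_def)
  have "\<exists>C. \<forall>\<^sub>F s in sequentially.
          (\<integral>\<^sup>+\<omega>. kappa \<mu> \<epsilon> s V (A s) \<omega> \<partial>M) \<le> ennreal (C * (real s * ln (real s)))"
  proof (rule nn_integral_kappa_bigO[where a = "K0 + 1" and b = b])
    show "0 \<le> b" using \<open>0 \<le> E\<close> by (simp add: b_def)
    show "\<forall>\<^sub>F s in sequentially. 1 \<le> real s * ln (real s) \<and>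
        (\<exists>m\<ge>1. real m \<le> (K0 + 1) * (real s * ln (real s)) \<and>
                square_tail s m \<le> ennreal (b * (real s * ln (real s))))"
      using eventually_ge_at_top[of 3]
    proof eventually_elim
      case (elim s)
      have "1 \<le> ln (real s)"
        using elim exp_le by (subst ln_ge_iff) (auto intro: order_trans)
      then have g: "real s \<le> real s * ln (real s)" "1 \<le> real s * ln (real s)"
        using elim by (auto simp: mult_le_cancel_left1 intro: order_trans)
      define m where "m = nat \<lceil>K0 * real s * ln (real s)\<rceil>"
      have "0 < K0 * real s * ln (real s)" using \<open>0 < K0\<close> \<open>1 \<le> ln (real s)\<close> elim by simp
      then have m: "1 \<le> m" "K0 * real s * ln (real s) \<le> real m" "real m \<le> (K0 + 1) * (real s * ln (real s))"
        using g by (auto simp: m_def algebra_simps) linarith+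
      have "square_tail s m \<le> ennreal (b * real s)"
        using square_tail_le_exp_moment[OF \<theta> int, of s m] m(2) elim
        by (simp add: K0_def b_def E_def mult_ac)
      also have "\<dots> \<le> ennreal (b * (real s * ln (real s)))"
        using g \<open>0 \<le> b\<close> by (intro ennreal_leI mult_left_mono)
      finally show ?case using m g by (auto intro!: exI[of _ m])
    qed
  qed
  then show ?thesis by (simp add: mult.assoc)
qed

end

theorem theorem1:
  fixes M :: "'a measure"
    and X V :: "nat \<Rightarrow> 'a \<Rightarrow> real"
    and A :: "nat \<Rightarrow> nat \<Rightarrow> 'a \<Rightarrow> real"
    and \<mu> \<epsilon> :: real
  assumes "prob_space M"
    and indep: "prob_space.indep_vars M (\<lambda>_. borel)
                  (\<lambda>i. case i of Inl n \<Rightarrow> X n | Inr n \<Rightarrow> V n) UNIV"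
    and X_id: "\<And>n. distr M borel (X n) = distr M borel (X 0)"
    and V_id: "\<And>n. distr M borel (V n) = distr M borel (V 0)"
    and X_pos: "\<And>n. AE \<omega> in M. X n \<omega> > 0"
    and V_nonneg: "\<And>n. AE \<omega> in M. V n \<omega> \<ge> 0"
    and X_int: "integrable M (X 0)"
    and mu_def: "\<mu> = (\<integral>\<omega>. X 0 \<omega> \<partial>M)"
    and eps: "0 < \<epsilon>" "\<epsilon> < \<mu>"
    and A_step: "\<And>s n \<omega>. s \<ge> 1 \<Longrightarrow> \<omega> \<in> space M \<Longrightarrow> A s n \<omega> - A s (Suc n) \<omega> = X n \<omega> / real s"
    and A_first: "\<And>s. s \<ge> 1 \<Longrightarrow> distributed M lborel (\<lambda>\<omega>. - A s 0 \<omega>)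
                          (excess_density M (\<lambda>\<omega>. X 0 \<omega> / real s))"
    and A_indep: "\<And>s. s \<ge> 1 \<Longrightarrow> prob_space.indep_vars M (\<lambda>_. borel)
                     (\<lambda>i. case i of None \<Rightarrow> (\<lambda>\<omega>. - A s 0 \<omega>)
                                | Some (Inl n) \<Rightarrow> X n | Some (Inr n) \<Rightarrow> V n) UNIV"
  shows "(\<forall>q::real. q > 2 \<longrightarrow> integrable M (\<lambda>\<omega>. V 0 \<omega> powr q) \<longrightarrow>
            (\<exists>C::real. eventually (\<lambda>s::nat.
               (\<integral>\<^sup>+ \<omega>. kappa \<mu> \<epsilon> s V (A s) \<omega> \<partial>M) \<le> ennreal (C * real s powr (q / (q - 1))))
             sequentially))
       \<and> (\<forall>\<theta>::real. \<theta> > 0 \<longrightarrow> integrable M (\<lambda>\<omega>. exp (\<theta> * V 0 \<omega>)) \<longrightarrow>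
            (\<exists>C::real. eventually (\<lambda>s::nat.
               (\<integral>\<^sup>+ \<omega>. kappa \<mu> \<epsilon> s V (A s) \<omega> \<partial>M) \<le> ennreal (C * real s * ln (real s)))
             sequentially))"
  \<comment> \<open>The bound on \<open>\<kappa>(A)\<close> holds pathwise once \<open>A\<^sub>1 \<le> 0\<close>.\<close>
proof -
  interpret stationary_infinite_server M X V A \<mu> \<epsilon>
    by (intro stationary_infinite_server.intro stationary_infinite_server_axioms.intro) (fact assms)+
  show ?thesis
    using nn_integral_kappa_moment_bound nn_integral_kappa_exp_moment_bound by blast
qed

end
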